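(* Run the UCB-like policy described in the context and let $\theta^*=(\log v_i^* )_{i\in\mathcal N}$. For $i\in\mathcal N$ and $\ell\in\{1,\dots,q\}$ define the event $$\mathcal A_{i,\ell}=\Big\{\Big|\frac{\partial\mathcal L_{\ell-1}}{\partial\theta_i}\Big|_{\theta=\theta^*}\Big|\le\sqrt{2n_i^{\ell-1}\Big(1+2\log\frac{2\sqrt T qN}{\delta}\Big)}\Big\},$$ $\mathcal A_\ell=\bigcap_{i=1}^N\mathcal A_{i,\ell}$ and $\mathcal A=\bigcap_{i=1}^N\bigcap_{\ell=1}^q\mathcal A_{i,\ell}$. Then $\mathbb P(\mathcal A_{i,\ell})\ge 1-\delta/(2qN)$ for each $i,\ell$; $\mathbb P(\mathcal A_\ell)\ge1-\delta/(2q)$ for each $\ell$; and $\mathbb P(\mathcal A)\ge 1-\delta/2$.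
   Context: Setting: $N$ products $\mathcal N=\{1,\dots,N\}$, a no-purchase option $0$, $K$ resources $\mathcal K=\{1,\dots,K\}$, horizon of $T$ periods. Product $i$ gives revenue $r(i)\in[0,1]$ and consumes $a(i,k)\in[0,1]$ units of resource $k$; $r(0)=a(0,k)=0$. Resource $k$ has initial inventory $Tc(k)$, $c(k)>0$. For $v\in\mathbb R_{>0}^N$ and $S\subseteq\mathcal N$ the MNL probabilities are $\varphi(i,S\mid v)=v_i/(1+\sum_{j\in S}v_j)$ for $i\in S$, $\varphi(0,S\mid v)=1/(1+\sum_{j\in S}v_j)$, $\varphi(i,S\mid v)=0$ for $i\in\mathcal N\setminus S$. The unknown true vector $v^*$ satisfies $v_i^*\in[1/R,R]$. In period $t$ the retailer offers $S_t\subseteq\mathcal N$ and the customer chooses $I_t\in S_t\cup\{0\}$ with conditional probability $\varphi(I_t,S_t\mid v^* )$ given the past. UCB-like policy: parameters $\tau$ (a multiple of $N$), switch budget $L$, $\delta\in(0,1)$, $q=q(L,K)=\lfloor (L-N)/(K+1)\rfloor\ge1$; $\Psi=\frac{R(1+NR)^2}{2}\sqrt{2+4\log\frac{2T^{1/2}q(K+1)N}{\delta}}$, $\varepsilon(n)=(\sqrt N+1)\Psi/\sqrt n$, $\omega=\frac{1}{T\min_k c(k)}\Big(4(\sqrt N+1)\sqrt{1+\frac{NT}{\tau q}}\Psi\sqrt{N^2T}+\sqrt{2T\log\frac{4(K+1)}{\delta}}+\frac{2N^2\Psi}{\sqrt\tau}\sqrt{2T\log\frac{4(K+1)}{\delta}}+\tau\Big)$.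 Warm start: for $i=1,\dots,N$ offer $S_t=\{i\}$ for $t=(i-1)\tau/N+1,\dots,i\tau/N$. Let $T_0=\tau$, $T_\ell=\ell\lfloor (T-\tau)/q\rfloor+\tau$ for $\ell=1,\dots,q$. In epoch $\ell$: let $n_i^{\ell-1}=\sum_{t=1}^{T_{\ell-1}}\mathbb I(i\in S_t)$; compute the MLE $\hat v^\ell=e^{\hat\theta}$, $\hat\theta$ minimizing the negative log-likelihood $\mathcal L_{\ell-1}(\theta)=-\sum_{t=1}^{T_{\ell-1}}\big[\theta_{I_t}-\log(1+\sum_{i\in S_t}e^{\theta_i})\big]$ ($\theta_0:=0$); solve the UCB-LP: maximize $\sum_{S}\sum_{i\in S}r(i)\big(\varphi(i,S\mid\hat v^\ell)+\varepsilon(n_i^{\ell-1})\big)y(S)$ subject to $\sum_{S}\sum_{i\in S}a(i,k)\big(\varphi(i,S\mid\hat v^\ell)-\varepsilon(n_i^{\ell-1})\big)y(S)\le(1-\omega)c(k)$ for all $k$, $\sum_S y(S)=1$, $y\ge0$, obtaining an optimal $y_\ell$; draw an assortment independently from $y_\ell$ for each period $T_{\ell-1}+1,\dots,T_\ell$, let $N_\ell(S)$ be the number of draws equal to $S$, and offer each $S$ with $N_\ell(S)>0$ for $N_\ell(S)$ consecutive periods; stop once a resource is exhausted. *)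

theory Defs
  imports "HOL-Probability.Probability"
begin

text \<open>Products are 1..N, the no-purchase option is 0. An assortment is a set of
products; a history is the list of (offered assortment, chosen option) pairs,
period t (1-based) being entry t-1.\<close>

type_synonym history = "(nat set \<times> nat) list"

definition mnl_prob :: "(nat \<Rightarrow> real) \<Rightarrow> nat set \<Rightarrow> nat \<Rightarrow> real" where
  "mnl_prob v S i =
     (if i = 0 then 1 / (1 + (\<Sum>j\<in>S. v j))
      else if i \<in> S then v i / (1 + (\<Sum>j\<in>S. v j)) else 0)"

text \<open>MNL choice distribution (a genuine pmf when S is a finite set of products and v > 0).\<close>
definition mnl_pmf :: "(nat \<Rightarrow> real) \<Rightarrow> nat set \<Rightarrow> nat pmf" where
  "mnl_pmf v S = embed_pmf (mnl_prob v S)"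

fun hist :: "(history \<Rightarrow> nat set pmf) \<Rightarrow> (nat \<Rightarrow> real) \<Rightarrow> nat \<Rightarrow> history pmf" where
  "hist pol v 0 = return_pmf []"
| "hist pol v (Suc t) =
     bind_pmf (hist pol v t) (\<lambda>h. bind_pmf (pol h) (\<lambda>S. bind_pmf (mnl_pmf v S)
        (\<lambda>I. return_pmf (h @ [(S, I)]))))"

definition neg_loglik :: "history \<Rightarrow> nat \<Rightarrow> (nat \<Rightarrow> real) \<Rightarrow> real" where
  "neg_loglik h m \<theta> =
     - (\<Sum>t<m. (if snd (h ! t) = 0 then 0 else \<theta> (snd (h ! t)))
               - ln (1 + (\<Sum>j\<in>fst (h ! t). exp (\<theta> j))))"

definition grad_i :: "history \<Rightarrow> nat \<Rightarrow> nat \<Rightarrow> (nat \<Rightarrow> real) \<Rightarrow> real" where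
  "grad_i h m i \<theta> = deriv (\<lambda>x. neg_loglik h m (\<theta>(i := x))) (\<theta> i)"

definition n_count :: "history \<Rightarrow> nat \<Rightarrow> nat \<Rightarrow> nat" where
  "n_count h m i = card {t. t < m \<and> i \<in> fst (h ! t)}"

definition epoch_end :: "nat \<Rightarrow> nat \<Rightarrow> nat \<Rightarrow> nat \<Rightarrow> nat" where
  "epoch_end T \<tau> q l = l * ((T - \<tau>) div q) + \<tau>"

definition event_A :: "nat \<Rightarrow> nat \<Rightarrow> nat \<Rightarrow> nat \<Rightarrow> real \<Rightarrow> (nat \<Rightarrow> real)
    \<Rightarrow> nat \<Rightarrow> nat \<Rightarrow> history set" where
  "event_A N T \<tau> q \<delta> v i l =
     {h. \<bar>grad_i h (epoch_end T \<tau> q (l - 1)) i (\<lambda>j. ln (v j))\<bar>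
         \<le> sqrt (2 * real (n_count h (epoch_end T \<tau> q (l - 1)) i)
                  * (1 + 2 * ln (2 * sqrt (real T) * real q * real N / \<delta>)))}"

end

theory Submission
  imports Defs "HOL-Probability.Hoeffding"
begin

(* For fixed i, the partial derivative of the negative log-likelihood at ln v is -M, where
M is the sum over the periods so far of 1{I_t = i} - phi(i, S_t | v). Given the past and S_t,
each summand is a centered Bernoulli variable, zero unless i is offered, so by Hoeffding's lemma
exp(eta M - eta^2 n / 2), with n the number of periods offering i, is a supermartingale for
every eta. As n is random, Markov's inequality is applied to the 2m tilts eta = +-sqrt(2c/k),
k = 1..m, one of which detects any deviation |M| > sqrt(2nc); hence such a deviation has
probability at most 2m exp(-c), and c = 1 + 2 log(2 sqrt T q N / delta) makes this at most
delta/(2qN). The bounds for A_l and A follow by union bounds. *)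

lemma centered_bernoulli_mgf_le:
  fixes p h :: real
  assumes "0 \<le> p" "p \<le> 1"
  shows "p * exp (h * (1 - p)) + (1 - p) * exp (- h * p) \<le> exp (h\<^sup>2 / 8)"
proof -
  have nonneg_case: "q * exp (g * (1 - q)) + (1 - q) * exp (- g * q) \<le> exp (g\<^sup>2 / 8)"
    if q: "0 \<le> q" "q \<le> 1" and g: "0 \<le> g" for q g :: real
  proof -
    have pos: "0 < 1 + q * (exp g - 1)"
      using q g by (intro add_pos_nonneg mult_nonneg_nonneg) auto
    have "q * exp (g * (1 - q)) + (1 - q) * exp (- g * q) = exp (- g * q) * (1 + q * (exp g - 1))"
      by (simp add: exp_diff exp_minus field_simps)
    also have "\<dots> = exp (- g * q + ln (1 + q * (exp g - 1)))"
      using pos by (simp add: exp_diff exp_minus field_simps)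
    also have "\<dots> \<le> exp (g\<^sup>2 / 8)"
      using Hoeffdings_lemma_aux[OF g q(1)] by simp
    finally show ?thesis .
  qed
  show ?thesis
  proof (cases "0 \<le> h")
    case True
    then show ?thesis using nonneg_case[OF assms] by simp
  next
    case False
    then have "(1 - p) * exp (- h * (1 - (1 - p))) + (1 - (1 - p)) * exp (- (- h) * (1 - p))
        \<le> exp ((- h)\<^sup>2 / 8)"
      using assms by (intro nonneg_case) auto
    then show ?thesis by (simp add: algebra_simps)
  qed
qed

lemma measure_pmf_prob_exp_ge_le:
  fixes M :: "'a pmf" and f :: "'a \<Rightarrow> real" and c :: real
  assumes "(\<integral>\<^sup>+x. ennreal (exp (f x)) \<partial>M) \<le> 1"
  shows "measure_pmf.prob M {x. c \<le> f x} \<le> exp (- c)"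
proof -
  have "emeasure M {x \<in> UNIV. c \<le> f x}
      \<le> ennreal (exp (- 1 * c)) * (\<integral>\<^sup>+x. ennreal (exp (1 * f x)) * indicator UNIV x \<partial>M)"
    by (intro Chernoff_ineq_nn_integral_ge) auto
  also have "\<dots> \<le> ennreal (exp (- c))"
    using assms mult_left_mono[OF assms, of "ennreal (exp (- c))"] by simp
  finally show ?thesis
    by (simp add: measure_pmf.emeasure_eq_measure)
qed

lemma exists_tilt_ge:
  fixes x c :: real and n :: nat
  assumes n: "0 < n" and c: "0 < c" and large: "sqrt (2 * real n * c) < \<bar>x\<bar>"
  shows "\<exists>\<eta> \<in> {sqrt (2 * c / n), - sqrt (2 * c / n)}. c \<le> \<eta> * x - \<eta>\<^sup>2 / 2 * n"
proof -
  define \<eta> where "\<eta> = sqrt (2 * c / n)"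
  have "\<eta> * sqrt (2 * real n * c) = sqrt ((2 * c)\<^sup>2)"
    using n by (simp add: \<eta>_def flip: real_sqrt_mult) (simp add: field_simps power2_eq_square)
  then have "\<eta> * sqrt (2 * real n * c) = 2 * c"
    using c by (simp only: real_sqrt_abs)
  moreover have "\<eta> * sqrt (2 * real n * c) \<le> \<eta> * \<bar>x\<bar>"
    using large c by (intro mult_left_mono) (auto simp: \<eta>_def)
  moreover have "\<eta>\<^sup>2 / 2 * n = c"
    using n c by (simp add: \<eta>_def)
  ultimately have "c \<le> (if 0 \<le> x then \<eta> else - \<eta>) * x - (if 0 \<le> x then \<eta> else - \<eta>)\<^sup>2 / 2 * n"
    by auto
  then show ?thesis
    unfolding \<eta>_def by (auto split: if_splits)
qed

lemma measure_pmf_self_normalized_tail: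
  fixes M :: "'a pmf" and X :: "'a \<Rightarrow> real" and n :: "'a \<Rightarrow> nat" and m :: nat and c :: real
  assumes exp_supermartingale: "\<And>\<eta>. (\<integral>\<^sup>+x. ennreal (exp (\<eta> * X x - \<eta>\<^sup>2 / 2 * real (n x))) \<partial>M) \<le> 1"
    and n_le: "\<And>x. x \<in> set_pmf M \<Longrightarrow> n x \<le> m"
    and X_zero: "\<And>x. x \<in> set_pmf M \<Longrightarrow> n x = 0 \<Longrightarrow> X x = 0"
    and c: "0 < c"
  shows "measure_pmf.prob M {x. sqrt (2 * real (n x) * c) < \<bar>X x\<bar>} \<le> 2 * real m * exp (- c)"
proof -
  define tilts where "tilts = (\<lambda>(k, \<sigma>). \<sigma> * sqrt (2 * c / real k)) ` ({1..m} \<times> {1, -1})"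
  define B where "B \<eta> = {x. c \<le> \<eta> * X x - \<eta>\<^sup>2 / 2 * real (n x)}" for \<eta>
  have "AE x in M. x \<in> {x. sqrt (2 * real (n x) * c) < \<bar>X x\<bar>} \<longrightarrow> x \<in> (\<Union>\<eta>\<in>tilts. B \<eta>)"
  proof (unfold AE_measure_pmf_iff, intro ballI impI)
    fix x assume x: "x \<in> set_pmf M" and "x \<in> {x. sqrt (2 * real (n x) * c) < \<bar>X x\<bar>}"
    then have large: "sqrt (2 * real (n x) * c) < \<bar>X x\<bar>"
      by simp
    then have "0 < n x"
      using X_zero[OF x] by (cases "n x = 0") auto
    with exists_tilt_ge[OF _ c large] obtain \<sigma> :: real
      where "\<sigma> \<in> {1, -1}" "x \<in> B (\<sigma> * sqrt (2 * c / real (n x)))"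
      unfolding B_def by force
    moreover have "n x \<in> {1..m}"
      using \<open>0 < n x\<close> n_le[OF x] by simp
    ultimately show "x \<in> (\<Union>\<eta>\<in>tilts. B \<eta>)"
      unfolding tilts_def by blast
  qed
  then have "measure_pmf.prob M {x. sqrt (2 * real (n x) * c) < \<bar>X x\<bar>} \<le> measure_pmf.prob M (\<Union>\<eta>\<in>tilts. B \<eta>)"
    by (intro measure_pmf.finite_measure_mono_AE) auto
  also have "\<dots> \<le> (\<Sum>\<eta>\<in>tilts. measure_pmf.prob M (B \<eta>))"
    by (intro measure_pmf.finite_measure_subadditive_finite) (auto simp: tilts_def)
  also have "\<dots> \<le> (\<Sum>\<eta>\<in>tilts. exp (- c))"
    unfolding B_def by (intro sum_mono measure_pmf_prob_exp_ge_le exp_supermartingale)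
  also have "\<dots> \<le> 2 * real m * exp (- c)"
  proof -
    have "card tilts \<le> card ({1..m} \<times> {1, -1 :: real})"
      unfolding tilts_def by (intro card_image_le) auto
    then have "real (card tilts) \<le> 2 * m"
      by (simp add: card_cartesian_product)
    then show ?thesis
      by (simp add: mult_right_mono)
  qed
  finally show ?thesis .
qed

lemma measure_pmf_prob_INT_ge:
  fixes M :: "'a pmf" and A :: "'b \<Rightarrow> 'a set"
  assumes "finite I" and "\<And>x. x \<in> I \<Longrightarrow> 1 - \<epsilon> \<le> measure_pmf.prob M (A x)"
  shows "1 - real (card I) * \<epsilon> \<le> measure_pmf.prob M (\<Inter>x\<in>I. A x)"
proof -
  have compl: "measure_pmf.prob M (- B) = 1 - measure_pmf.prob M B" for B
    using measure_pmf.prob_compl[of B M] by (simp add: Compl_eq_Diff_UNIV)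
  have "measure_pmf.prob M (\<Union>x\<in>I. - A x) \<le> (\<Sum>x\<in>I. measure_pmf.prob M (- A x))"
    using assms(1) by (intro measure_pmf.finite_measure_subadditive_finite) auto
  also have "\<dots> \<le> (\<Sum>x\<in>I. \<epsilon>)"
    by (intro sum_mono) (auto simp: compl dest: assms(2))
  finally show ?thesis
    using compl[of "\<Inter>x\<in>I. A x"] by simp
qed

(* Minus the contribution of the period x = (S, I) to the partial derivative of neg_loglik
in theta_i at theta = ln v. *)
definition score :: "(nat \<Rightarrow> real) \<Rightarrow> nat \<Rightarrow> nat set \<times> nat \<Rightarrow> real" where
  "score v i x = of_bool (snd x = i) - mnl_prob v (fst x) i"

context
  fixes v :: "nat \<Rightarrow> real" and S :: "nat set"
  assumes finite_S: "finite S" and zero_notin_S: "0 \<notin> S"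
    and v_nonneg: "\<And>j. j \<in> S \<Longrightarrow> 0 \<le> v j"
begin

lemma mnl_prob_nonneg: "0 \<le> mnl_prob v S x"
proof -
  have "0 \<le> sum v S"
    using v_nonneg by (intro sum_nonneg) auto
  then show ?thesis
    using v_nonneg by (simp add: mnl_prob_def)
qed

lemma sum_mnl_prob: "(\<Sum>x\<in>insert 0 S. mnl_prob v S x) = 1"
proof -
  have pos: "0 \<le> sum v S"
    using v_nonneg by (intro sum_nonneg) auto
  have "(\<Sum>x\<in>S. mnl_prob v S x) = (\<Sum>x\<in>S. v x / (1 + sum v S))"
    using zero_notin_S by (intro sum.cong) (auto simp: mnl_prob_def)
  then have "(\<Sum>x\<in>insert 0 S. mnl_prob v S x) = 1 / (1 + sum v S) + sum v S / (1 + sum v S)"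
    using finite_S zero_notin_S by (simp add: mnl_prob_def sum_divide_distrib)
  also have "\<dots> = 1"
    using pos by (simp add: field_simps)
  finally show ?thesis .
qed

lemma mnl_prob_le_1: "mnl_prob v S x \<le> 1"
proof (cases "x \<in> insert 0 S")
  case True
  then have "mnl_prob v S x \<le> (\<Sum>y\<in>insert 0 S. mnl_prob v S y)"
    using finite_S mnl_prob_nonneg by (intro member_le_sum) auto
  then show ?thesis
    by (simp add: sum_mnl_prob)
qed (simp add: mnl_prob_def)

lemma pmf_mnl_pmf: "pmf (mnl_pmf v S) x = mnl_prob v S x"
  unfolding mnl_pmf_def
proof (rule pmf_embed_pmf)
  have "(\<integral>\<^sup>+x. ennreal (mnl_prob v S x) \<partial>count_space UNIV) = (\<Sum>x\<in>insert 0 S. ennreal (mnl_prob v S x))"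
    using finite_S by (intro nn_integral_count_space') (auto simp: mnl_prob_def)
  also have "\<dots> = 1"
    using mnl_prob_nonneg by (subst sum_ennreal) (auto simp: sum_mnl_prob)
  finally show "(\<integral>\<^sup>+x. ennreal (mnl_prob v S x) \<partial>count_space UNIV) = 1" .
qed (use mnl_prob_nonneg in auto)

lemma set_pmf_mnl_pmf: "set_pmf (mnl_pmf v S) \<subseteq> insert 0 S"
  by (auto simp: set_pmf_iff pmf_mnl_pmf mnl_prob_def split: if_splits)

lemma map_pmf_mnl_pmf_eq_bernoulli:
  "map_pmf (\<lambda>I. I = i) (mnl_pmf v S) = bernoulli_pmf (mnl_prob v S i)"
proof (rule pmf_eqI)
  fix b :: bool
  have "measure_pmf.prob (mnl_pmf v S) (- {i}) = 1 - mnl_prob v S i"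
    using measure_pmf.prob_compl[of "{i}" "mnl_pmf v S"]
    by (simp add: Compl_eq_Diff_UNIV measure_pmf_single pmf_mnl_pmf)
  moreover have "(\<lambda>I. I = i) -` {b} = (if b then {i} else - {i})"
    by auto
  ultimately show "pmf (map_pmf (\<lambda>I. I = i) (mnl_pmf v S)) b = pmf (bernoulli_pmf (mnl_prob v S i)) b"
    using mnl_prob_nonneg mnl_prob_le_1 by (simp add: pmf_map measure_pmf_single pmf_mnl_pmf)
qed

lemma nn_integral_mnl_pmf_exp_score_le_1:
  assumes "i \<noteq> 0"
  shows "(\<integral>\<^sup>+I. ennreal (exp (\<eta> * score v i (S, I) - \<eta>\<^sup>2 / 2 * of_bool (i \<in> S))) \<partial>mnl_pmf v S) \<le> 1"
proof -
  define p where "p = mnl_prob v S i"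
  define k :: real where "k = of_bool (i \<in> S)"
  have p: "0 \<le> p" "p \<le> 1"
    unfolding p_def using mnl_prob_nonneg mnl_prob_le_1 .
  have "(\<integral>\<^sup>+I. ennreal (exp (\<eta> * score v i (S, I) - \<eta>\<^sup>2 / 2 * k)) \<partial>mnl_pmf v S)
      = (\<integral>\<^sup>+b. ennreal (exp (\<eta> * (of_bool b - p) - \<eta>\<^sup>2 / 2 * k)) \<partial>map_pmf (\<lambda>I. I = i) (mnl_pmf v S))"
    by (simp add: p_def score_def)
  also have "\<dots> = ennreal (exp (\<eta> * (1 - p) - \<eta>\<^sup>2 / 2 * k) * p + exp (- \<eta> * p - \<eta>\<^sup>2 / 2 * k) * (1 - p))"
    using p by (simp add: map_pmf_mnl_pmf_eq_bernoulli p_def[symmetric] ennreal_mult)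
  also have "\<dots> \<le> 1"
  proof (cases "i \<in> S")
    case False
    then have "p = 0" "k = 0"
      using assms by (simp_all add: p_def k_def mnl_prob_def)
    then show ?thesis by simp
  next
    case True
    then have "exp (\<eta> * (1 - p) - \<eta>\<^sup>2 / 2 * k) = exp (- \<eta>\<^sup>2 / 2) * exp (\<eta> * (1 - p))"
        "exp (- \<eta> * p - \<eta>\<^sup>2 / 2 * k) = exp (- \<eta>\<^sup>2 / 2) * exp (- \<eta> * p)"
      by (simp_all add: k_def algebra_simps flip: exp_add)
    then have "exp (\<eta> * (1 - p) - \<eta>\<^sup>2 / 2 * k) * p + exp (- \<eta> * p - \<eta>\<^sup>2 / 2 * k) * (1 - p)
        = exp (- \<eta>\<^sup>2 / 2) * (p * exp (\<eta> * (1 - p)) + (1 - p) * exp (- \<eta> * p))"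
      by (simp add: algebra_simps)
    also have "\<dots> \<le> exp (- \<eta>\<^sup>2 / 2) * exp (\<eta>\<^sup>2 / 8)"
      using p by (intro mult_left_mono centered_bernoulli_mgf_le) auto
    also have "\<dots> \<le> 1"
      by (simp flip: exp_add)
    finally show ?thesis
      by (simp add: ennreal_le_1)
  qed
  finally show ?thesis
    by (simp add: k_def)
qed

end

lemma mnl_prob_cong:
  assumes "\<And>j. j \<in> S \<Longrightarrow> v j = w j"
  shows "mnl_prob v S i = mnl_prob w S i"
  using assms by (simp add: mnl_prob_def cong: sum.cong)

lemma set_pmf_hist:
  assumes pol: "\<And>h. set_pmf (pol h) \<subseteq> Pow {1..N}"
    and v_nonneg: "\<And>j. j \<in> {1..N} \<Longrightarrow> 0 \<le> v j"
    and h: "h \<in> set_pmf (hist pol v t)"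
  shows "length h = t \<and> (\<forall>s<t. fst (h ! s) \<subseteq> {1..N} \<and> snd (h ! s) \<in> insert 0 (fst (h ! s)))"
  using h
proof (induction t arbitrary: h)
  case (Suc t)
  then obtain h' S I where h': "h' \<in> set_pmf (hist pol v t)" and S: "S \<in> set_pmf (pol h')"
    and I: "I \<in> set_pmf (mnl_pmf v S)" and h_eq: "h = h' @ [(S, I)]"
    by auto
  have S_sub: "S \<subseteq> {1..N}"
    using S pol by auto
  then have "finite S" "0 \<notin> S" "\<And>j. j \<in> S \<Longrightarrow> 0 \<le> v j"
    using v_nonneg finite_subset by auto
  then have "I \<in> insert 0 S"
    using I set_pmf_mnl_pmf by blast
  then show ?case
    using Suc.IH[OF h'] h_eq S_sub by (auto simp: nth_append less_Suc_eq)
qed simp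

lemma nn_integral_hist_exp_sum_take_le_1:
  assumes step: "\<And>h S. S \<in> set_pmf (pol h) \<Longrightarrow> (\<integral>\<^sup>+I. ennreal (exp (g (S, I))) \<partial>mnl_pmf v S) \<le> 1"
  shows "(\<integral>\<^sup>+h. ennreal (exp (sum_list (map g (take m h)))) \<partial>hist pol v t) \<le> 1"
proof (induction t)
  case (Suc t)
  (* take m (h @ [x]) = take m h @ take (m - length h) [x], so periods after m contribute 1 *)
  define next_factor where "next_factor h x = ennreal (exp (sum_list (map g (take (m - length h) [x]))))"
    for h :: history and x
  have next_factor_le_1: "(\<integral>\<^sup>+S. \<integral>\<^sup>+I. next_factor h (S, I) \<partial>mnl_pmf v S \<partial>pol h) \<le> 1" for h
  proof -
    have "(\<integral>\<^sup>+I. next_factor h (S, I) \<partial>mnl_pmf v S) \<le> 1" if "S \<in> set_pmf (pol h)" for S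
      using step[OF that]
      by (cases "m - length h") (simp_all add: next_factor_def measure_pmf.emeasure_space_1)
    then have "(\<integral>\<^sup>+S. \<integral>\<^sup>+I. next_factor h (S, I) \<partial>mnl_pmf v S \<partial>pol h) \<le> (\<integral>\<^sup>+S. 1 \<partial>pol h)"
      by (intro nn_integral_mono_AE) (simp add: AE_measure_pmf_iff)
    then show ?thesis
      by (simp add: measure_pmf.emeasure_space_1)
  qed
  have "(\<integral>\<^sup>+h. ennreal (exp (sum_list (map g (take m h)))) \<partial>hist pol v (Suc t))
      = (\<integral>\<^sup>+h. ennreal (exp (sum_list (map g (take m h))))
           * (\<integral>\<^sup>+S. \<integral>\<^sup>+I. next_factor h (S, I) \<partial>mnl_pmf v S \<partial>pol h) \<partial>hist pol v t)"
    by (simp add: next_factor_def exp_add ennreal_mult nn_integral_cmult)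
  also have "\<dots> \<le> (\<integral>\<^sup>+h. ennreal (exp (sum_list (map g (take m h)))) \<partial>hist pol v t)"
    using next_factor_le_1 by (intro nn_integral_mono) (simp add: mult_left_le)
  finally show ?case
    using Suc.IH by simp
qed simp

lemma n_count_eq_sum: "real (n_count h m i) = (\<Sum>t<m. of_bool (i \<in> fst (h ! t)))"
  by (simp add: n_count_def Int_def)

lemma n_count_le: "n_count h m i \<le> m"
  unfolding n_count_def by (rule order.trans[OF card_mono[of "{..<m}"]]) auto

lemma sum_list_map_take:
  assumes "m \<le> length xs"
  shows "sum_list (map g (take m xs)) = (\<Sum>t<m. g (xs ! t))"
  using assms by (simp add: sum_list_sum_nth atLeast0LessThan min_absorb1)

lemma nn_integral_hist_exp_score_le_1:
  assumes pol: "\<And>h. set_pmf (pol h) \<subseteq> Pow {1..N}"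
    and v_nonneg: "\<And>j. j \<in> {1..N} \<Longrightarrow> 0 \<le> v j" and i: "i \<noteq> 0" and m: "m \<le> T"
  shows "(\<integral>\<^sup>+h. ennreal (exp (\<eta> * (\<Sum>t<m. score v i (h ! t)) - \<eta>\<^sup>2 / 2 * real (n_count h m i)))
           \<partial>hist pol v T) \<le> 1"
proof -
  define g where "g x = \<eta> * score v i x - \<eta>\<^sup>2 / 2 * of_bool (i \<in> fst x)" for x
  have "(\<integral>\<^sup>+h. ennreal (exp (\<eta> * (\<Sum>t<m. score v i (h ! t)) - \<eta>\<^sup>2 / 2 * real (n_count h m i)))
           \<partial>hist pol v T)
      = (\<integral>\<^sup>+h. ennreal (exp (sum_list (map g (take m h)))) \<partial>hist pol v T)"
  proof (intro nn_integral_cong_AE, unfold AE_measure_pmf_iff, intro ballI)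
    fix h assume "h \<in> set_pmf (hist pol v T)"
    then have "sum_list (map g (take m h)) = (\<Sum>t<m. g (h ! t))"
      using set_pmf_hist[OF pol v_nonneg] m by (intro sum_list_map_take) simp
    also have "\<dots> = \<eta> * (\<Sum>t<m. score v i (h ! t)) - \<eta>\<^sup>2 / 2 * real (n_count h m i)"
      unfolding g_def n_count_eq_sum by (simp add: sum_subtractf sum_distrib_left del: sum_of_bool_eq)
    finally show "ennreal (exp (\<eta> * (\<Sum>t<m. score v i (h ! t)) - \<eta>\<^sup>2 / 2 * real (n_count h m i)))
        = ennreal (exp (sum_list (map g (take m h))))"
      by simp
  qed
  also have "\<dots> \<le> 1"
  proof (rule nn_integral_hist_exp_sum_take_le_1)
    fix h S assume "S \<in> set_pmf (pol h)"
    then have "S \<subseteq> {1..N}"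
      using pol by auto
    then have "finite S" "0 \<notin> S" "\<And>j. j \<in> S \<Longrightarrow> 0 \<le> v j"
      using v_nonneg finite_subset by auto
    from nn_integral_mnl_pmf_exp_score_le_1[OF this i]
    show "(\<integral>\<^sup>+I. ennreal (exp (g (S, I))) \<partial>mnl_pmf v S) \<le> 1"
      by (simp add: g_def)
  qed
  finally show ?thesis .
qed

lemma sum_score_eq_0_if_n_count_eq_0:
  assumes choices: "\<And>t. t < m \<Longrightarrow> snd (h ! t) \<in> insert 0 (fst (h ! t))"
    and "n_count h m i = 0" and i: "i \<noteq> 0"
  shows "(\<Sum>t<m. score v i (h ! t)) = 0"
proof (intro sum.neutral ballI)
  fix t assume "t \<in> {..<m}"
  then have "i \<notin> fst (h ! t)" and "t < m"
    using \<open>n_count h m i = 0\<close> by (auto simp: n_count_def)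
  moreover from this have "snd (h ! t) \<noteq> i"
    using choices[OF \<open>t < m\<close>] i by auto
  ultimately show "score v i (h ! t) = 0"
    using i by (simp add: score_def mnl_prob_def)
qed

lemma neg_loglik_has_real_derivative:
  fixes \<theta> :: "nat \<Rightarrow> real"
  assumes finite: "\<And>t. t < m \<Longrightarrow> finite (fst (h ! t))" and i: "i \<noteq> 0"
  shows "((\<lambda>x. neg_loglik h m (\<theta>(i := x))) has_real_derivative
           - (\<Sum>t<m. score (\<lambda>j. exp (\<theta> j)) i (h ! t))) (at (\<theta> i))"
proof -
  have choice: "((\<lambda>x. if snd (h ! t) = 0 then 0 else (\<theta>(i := x)) (snd (h ! t)))
      has_real_derivative of_bool (snd (h ! t) = i)) (at (\<theta> i))" for t
  proof (cases "snd (h ! t) = i")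
    case False
    then have "(\<lambda>x. if snd (h ! t) = 0 then 0 else (\<theta>(i := x)) (snd (h ! t)))
        = (\<lambda>_. if snd (h ! t) = 0 then 0 else \<theta> (snd (h ! t)))"
      by auto
    then show ?thesis
      using False by simp
  qed (use i in simp)
  have log_partition: "((\<lambda>x. ln (1 + (\<Sum>j\<in>fst (h ! t). exp ((\<theta>(i := x)) j))))
      has_real_derivative mnl_prob (\<lambda>j. exp (\<theta> j)) (fst (h ! t)) i) (at (\<theta> i))"
    if t: "t < m" for t
  proof -
    define S where "S = fst (h ! t)"
    have "((\<lambda>x. \<Sum>j\<in>S. exp ((\<theta>(i := x)) j)) has_real_derivative
        (\<Sum>j\<in>S. if j = i then exp (\<theta> i) else 0)) (at (\<theta> i))"
      by (intro DERIV_sum) (auto intro!: derivative_eq_intros)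
    moreover have "(\<Sum>j\<in>S. if j = i then exp (\<theta> i) else 0) = of_bool (i \<in> S) * exp (\<theta> i)"
      using finite[OF t] by (simp add: S_def sum.delta')
    ultimately have "((\<lambda>x. 1 + (\<Sum>j\<in>S. exp ((\<theta>(i := x)) j))) has_real_derivative
        0 + of_bool (i \<in> S) * exp (\<theta> i)) (at (\<theta> i))"
      by (intro DERIV_add) auto
    moreover have "0 < 1 + (\<Sum>j\<in>S. exp ((\<theta>(i := \<theta> i)) j))"
      by (intro add_pos_nonneg sum_nonneg) auto
    ultimately show ?thesis
      using i DERIV_chain2[OF DERIV_ln_divide] unfolding S_def[symmetric]
      by (fastforce simp: mnl_prob_def)
  qed
  have "((\<lambda>x. \<Sum>t<m. (if snd (h ! t) = 0 then 0 else (\<theta>(i := x)) (snd (h ! t)))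
        - ln (1 + (\<Sum>j\<in>fst (h ! t). exp ((\<theta>(i := x)) j)))) has_real_derivative
      (\<Sum>t<m. score (\<lambda>j. exp (\<theta> j)) i (h ! t))) (at (\<theta> i))"
    unfolding score_def by (intro DERIV_sum DERIV_diff choice log_partition) simp
  then show ?thesis
    unfolding neg_loglik_def by (rule DERIV_minus)
qed

lemma grad_i_ln_eq:
  assumes finite: "\<And>t. t < m \<Longrightarrow> finite (fst (h ! t))"
    and v_pos: "\<And>t j. t < m \<Longrightarrow> j \<in> fst (h ! t) \<Longrightarrow> 0 < v j" and i: "i \<noteq> 0"
  shows "grad_i h m i (\<lambda>j. ln (v j)) = - (\<Sum>t<m. score v i (h ! t))"
proof -
  have "grad_i h m i (\<lambda>j. ln (v j)) = - (\<Sum>t<m. score (\<lambda>j. exp (ln (v j))) i (h ! t))"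
    unfolding grad_i_def by (intro DERIV_imp_deriv neg_loglik_has_real_derivative finite i)
  also have "\<dots> = - (\<Sum>t<m. score v i (h ! t))"
    using v_pos by (intro arg_cong[where f = uminus] sum.cong refl) (auto simp: score_def intro!: mnl_prob_cong)
  finally show ?thesis .
qed

lemma grad_i_ln_eq_on_hist:
  assumes pol: "\<And>h. set_pmf (pol h) \<subseteq> Pow {1..N}"
    and v_pos: "\<And>j. j \<in> {1..N} \<Longrightarrow> 0 < v j"
    and h: "h \<in> set_pmf (hist pol v T)" and m: "m \<le> T" and i: "i \<noteq> 0"
  shows "grad_i h m i (\<lambda>j. ln (v j)) = - (\<Sum>t<m. score v i (h ! t))"
proof (rule grad_i_ln_eq)
  have offered: "fst (h ! t) \<subseteq> {1..N}" if "t < m" for t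
    using set_pmf_hist[OF pol _ h] v_pos m that by (simp add: less_imp_le)
  show "finite (fst (h ! t))" if "t < m" for t
    using offered[OF that] finite_subset by blast
  show "0 < v j" if "t < m" "j \<in> fst (h ! t)" for t j
    using offered[OF that(1)] that(2) v_pos by blast
qed (rule i)

lemma epoch_end_le:
  assumes "l \<le> q" and "\<tau> \<le> T"
  shows "epoch_end T \<tau> q l \<le> T"
proof -
  have "l * ((T - \<tau>) div q) \<le> q * ((T - \<tau>) div q)"
    using assms(1) by (rule mult_right_mono) simp
  also have "\<dots> \<le> T - \<tau>"
    by simp
  finally show ?thesis
    using assms(2) by (simp add: epoch_end_def)
qed

lemma confidence_level_pos:
  fixes T :: nat and k \<delta> :: real
  assumes "1 \<le> k" and "0 < \<delta>" and "\<delta> \<le> 1"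
  shows "0 < 1 + 2 * ln (2 * sqrt (real T) * k / \<delta>)"
proof (cases "T = 0")
  case False
  then have "1 * 1 \<le> sqrt (real T) * k"
    using assms(1) by (intro mult_mono) auto
  then have "1 \<le> 2 * sqrt (real T) * k / \<delta>"
    using assms(2,3) by (simp add: field_simps)
  then have "0 \<le> ln (2 * sqrt (real T) * k / \<delta>)"
    by (rule ln_ge_zero)
  then show ?thesis
    by simp
qed simp

lemma two_mul_exp_neg_confidence_level_le:
  fixes m T :: nat and k \<delta> :: real
  assumes m: "m \<le> T" and k: "1 \<le> k" and \<delta>: "0 < \<delta>" "\<delta> \<le> 1"
  shows "2 * real m * exp (- (1 + 2 * ln (2 * sqrt (real T) * k / \<delta>))) \<le> \<delta> / (2 * k)"
proof (cases "m = 0")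
  case False
  then have T: "0 < real T"
    using m by simp
  define X where "X = 2 * sqrt (real T) * k / \<delta>"
  have X: "0 < X"
    using T k \<delta> by (simp add: X_def)
  have ln_sq: "2 * ln X = ln (X\<^sup>2)"
    using X by (simp add: ln_realpow)
  have "exp (- (1 + 2 * ln X)) = exp (- 1) / exp (2 * ln X)"
    by (simp add: exp_diff[symmetric])
  also have "exp (2 * ln X) = X\<^sup>2"
    unfolding ln_sq using X by simp
  also have "X\<^sup>2 = 4 * real T * k\<^sup>2 / \<delta>\<^sup>2"
    using T by (simp add: X_def power_mult_distrib power_divide)
  finally have "2 * real m * exp (- (1 + 2 * ln X))
      = real m / real T * exp (- 1) * (\<delta> / k) * (\<delta> / (2 * k))"
    using T k \<delta> by (simp add: field_simps power2_eq_square)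
  also have "\<dots> \<le> 1 * 1 * 1 * (\<delta> / (2 * k))"
  proof -
    have "real m / real T \<le> 1" "\<delta> / k \<le> 1"
      using m T k \<delta> by simp_all
    then show ?thesis
      using k \<delta> by (intro mult_mono) simp_all
  qed
  finally show ?thesis
    by (simp add: X_def)
qed (use k \<delta> in simp)

lemma prob_event_A_ge:
  assumes pol: "\<And>h. set_pmf (pol h) \<subseteq> Pow {1..N}"
    and v_pos: "\<And>j. j \<in> {1..N} \<Longrightarrow> 0 < v j"
    and i: "i \<in> {1..N}" and l: "l \<le> q" and q: "1 \<le> q" and N: "1 \<le> N" and \<tau>: "\<tau> \<le> T"
    and \<delta>: "0 < \<delta>" "\<delta> \<le> 1"
  shows "1 - \<delta> / (2 * real q * real N) \<le> measure_pmf.prob (hist pol v T) (event_A N T \<tau> q \<delta> v i l)"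
proof -
  define m where "m = epoch_end T \<tau> q (l - 1)"
  define c where "c = 1 + 2 * ln (2 * sqrt (real T) * (real q * real N) / \<delta>)"
  define X where "X h = (\<Sum>t<m. score v i (h ! t))" for h :: history
  have m: "m \<le> T"
    unfolding m_def using l \<tau> by (intro epoch_end_le) auto
  have qN: "1 \<le> real q * real N"
    using mult_mono[of 1 "real q" 1 "real N"] q N by simp
  have i0: "i \<noteq> 0" and v_nonneg: "\<And>j. j \<in> {1..N} \<Longrightarrow> 0 \<le> v j"
    using i v_pos by (auto simp: less_imp_le)
  have choices: "snd (h ! t) \<in> insert 0 (fst (h ! t))"
    if "h \<in> set_pmf (hist pol v T)" "t < m" for h t
    using set_pmf_hist[OF pol v_nonneg that(1)] m that(2) by simp
  have "AE h in hist pol v T. h \<in> - event_A N T \<tau> q \<delta> v i l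
      \<longrightarrow> h \<in> {h. sqrt (2 * real (n_count h m i) * c) < \<bar>X h\<bar>}"
  proof (unfold AE_measure_pmf_iff, intro ballI impI)
    fix h assume h: "h \<in> set_pmf (hist pol v T)" and "h \<in> - event_A N T \<tau> q \<delta> v i l"
    moreover have "grad_i h m i (\<lambda>j. ln (v j)) = - X h"
      unfolding X_def using pol v_pos h m i0 by (rule grad_i_ln_eq_on_hist)
    ultimately show "h \<in> {h. sqrt (2 * real (n_count h m i) * c) < \<bar>X h\<bar>}"
      by (simp add: event_A_def m_def c_def mult.assoc not_le)
  qed
  then have "measure_pmf.prob (hist pol v T) (- event_A N T \<tau> q \<delta> v i l)
      \<le> measure_pmf.prob (hist pol v T) {h. sqrt (2 * real (n_count h m i) * c) < \<bar>X h\<bar>}"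
    by (intro measure_pmf.finite_measure_mono_AE) auto
  also have "\<dots> \<le> 2 * real m * exp (- c)"
    unfolding X_def
  proof (rule measure_pmf_self_normalized_tail)
    show "0 < c"
      unfolding c_def using qN \<delta> by (rule confidence_level_pos)
  qed (use nn_integral_hist_exp_score_le_1[OF pol v_nonneg i0 m] n_count_le choices
         sum_score_eq_0_if_n_count_eq_0[OF _ _ i0] in auto)
  also have "\<dots> \<le> \<delta> / (2 * (real q * real N))"
    unfolding c_def using m qN \<delta> by (rule two_mul_exp_neg_confidence_level_le)
  finally show ?thesis
    using measure_pmf.prob_compl[of "event_A N T \<tau> q \<delta> v i l" "hist pol v T"]
    by (simp add: Compl_eq_Diff_UNIV mult.assoc)
qed

theorem lemma1:
  fixes N K L T \<tau> :: nat and \<delta> R :: real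
    and v :: "nat \<Rightarrow> real" and pol :: "history \<Rightarrow> nat set pmf"
  defines "q \<equiv> (L - N) div (K + 1)"
  assumes "N \<ge> 1" and "N dvd \<tau>" and "\<tau> \<le> T"
    and "0 < \<delta>" and "\<delta> < 1"
    and "q \<ge> 1"
    and "R > 0" and "\<And>i. i \<in> {1..N} \<Longrightarrow> 1 / R \<le> v i \<and> v i \<le> R"
    and "\<And>h. set_pmf (pol h) \<subseteq> Pow {1..N}"
  shows "(\<forall>i\<in>{1..N}. \<forall>l\<in>{1..q}.
            measure_pmf.prob (hist pol v T) (event_A N T \<tau> q \<delta> v i l)
              \<ge> 1 - \<delta> / (2 * real q * real N))
       \<and> (\<forall>l\<in>{1..q}.
            measure_pmf.prob (hist pol v T) (\<Inter>i\<in>{1..N}. event_A N T \<tau> q \<delta> v i l)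
              \<ge> 1 - \<delta> / (2 * real q))
       \<and> measure_pmf.prob (hist pol v T) (\<Inter>i\<in>{1..N}. \<Inter>l\<in>{1..q}. event_A N T \<tau> q \<delta> v i l)
              \<ge> 1 - \<delta> / 2"
proof -
  let ?P = "measure_pmf.prob (hist pol v T)" and ?A = "event_A N T \<tau> q \<delta> v"
  have v_pos: "0 < v j" if "j \<in> {1..N}" for j
    using assms(9)[OF that] assms(8) by (meson divide_pos_pos less_le_trans zero_less_one)
  have single: "1 - \<delta> / (2 * real q * real N) \<le> ?P (?A i l)" if "i \<in> {1..N}" "l \<in> {1..q}" for i l
    using assms that by (intro prob_event_A_ge[OF assms(10) v_pos]) auto
  have epoch: "1 - \<delta> / (2 * real q) \<le> ?P (\<Inter>i\<in>{1..N}. ?A i l)" if "l \<in> {1..q}" for l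
    using measure_pmf_prob_INT_ge[of "{1..N}", OF _ single[OF _ that]] assms(2) by simp
  have product: "1 - \<delta> / (2 * real N) \<le> ?P (\<Inter>l\<in>{1..q}. ?A i l)" if "i \<in> {1..N}" for i
    using measure_pmf_prob_INT_ge[of "{1..q}", OF _ single[OF that]] assms(7) by simp
  have "1 - \<delta> / 2 \<le> ?P (\<Inter>i\<in>{1..N}. \<Inter>l\<in>{1..q}. ?A i l)"
    using measure_pmf_prob_INT_ge[of "{1..N}", OF _ product] assms(2) by simp
  then show ?thesis
    using single epoch by blast
qed

end
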